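(* Let $\Lambda\subseteq\mathbb Z$ (a finite chain $\{0,\dots,L-1\}$ or $\mathbb Z$) and let $H$ be a bounded self-adjoint operator on $\ell^2(\Lambda)\otimes\mathbb C^2$ such that $\sup_{x}\sum_{x'}\|H_{x,x'}\|e^{|x-x'|/d}\le K_d$ for some $d,K_d>0$. Let $f:\mathbb R\to\mathbb R$ be bounded with Fourier transform $\hat f$ (so that $f(E)=\frac1{2\pi}\int_{\mathbb R}\hat f(\omega)e^{i\omega E}\,d\omega$), and suppose there exist $\beta>0$, $C_\beta>0$ with $|\hat f(\omega)\,\omega|\le C_\beta e^{-\beta|\omega|}$ for all $\omega\in\mathbb R$. Then for all sites $x,y$, $$\|f(H)_{x,y}\|\le 4\Big(\|f\|_\infty+\frac{C_\beta K_d}{\beta}+C_\beta\frac{|x-y|}{d}\Big)e^{-|x-y|/d'},\qquad d'=d\max(1,K_d/\beta),$$ where $\|f\|_\infty=\sup_{E\in\mathbb R}|f(E)|$.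
   Context: $T_{x,y}$ denotes the $2\times2$ matrix block of an operator $T$ between sites $x$ and $y$, and $\|\cdot\|$ is the operator norm. $f(H)$ is defined by the Weyl functional calculus $f(H)=\frac1{2\pi}\int_{\mathbb R}\hat f(\omega)e^{i\omega H}d\omega$, which coincides with the spectral definition. *)

theory Defs
  imports "HOL-Analysis.Analysis"
begin

text \<open>An operator on ell2(Lambda) tensor C^2 is represented by its 2x2 block kernel
  H x y :: complex^2^2 (x, y sites in Lambda, a subset of the integers).\<close>

type_synonym block = "complex^2^2"

definition blk_norm :: "block \<Rightarrow> real" where
  "blk_norm A = onorm (\<lambda>v::complex^2. A *v v)"

definition blk_adj :: "block \<Rightarrow> block" where
  "blk_adj A = (\<chi> i j. cnj (A $ j $ i))"

fun ker_pow :: "int set \<Rightarrow> (int \<Rightarrow> int \<Rightarrow> block) \<Rightarrow> nat \<Rightarrow> int \<Rightarrow> int \<Rightarrow> block" where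
  "ker_pow Lam H 0 x y = (if x = y then mat 1 else 0)"
| "ker_pow Lam H (Suc n) x y = (\<Sum>\<^sub>\<infinity>z\<in>Lam. H x z ** ker_pow Lam H n z y)"

definition ker_exp :: "int set \<Rightarrow> (int \<Rightarrow> int \<Rightarrow> block) \<Rightarrow> real \<Rightarrow> int \<Rightarrow> int \<Rightarrow> block" where
  "ker_exp Lam H w x y =
     (\<chi> i j. (\<Sum>n. ((\<i> * complex_of_real w) ^ n / of_nat (fact n)) * (ker_pow Lam H n x y $ i $ j)))"

definition pv_integral :: "(real \<Rightarrow> complex) \<Rightarrow> complex" where
  "pv_integral g = Lim (at_right 0) (\<lambda>\<epsilon>. LINT w:{w. \<epsilon> \<le> \<bar>w\<bar>}|lborel. g w)"

text \<open>Weyl functional calculus: f(H) = (1/2pi) int fhat(w) exp(i w H) dw, blockwise.\<close>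
definition weyl_calc :: "(real \<Rightarrow> complex) \<Rightarrow> int set \<Rightarrow> (int \<Rightarrow> int \<Rightarrow> block) \<Rightarrow> int \<Rightarrow> int \<Rightarrow> block" where
  "weyl_calc fhat Lam H x y =
     (\<chi> i j. pv_integral (\<lambda>w. fhat w * ker_exp Lam H w x y $ i $ j) / complex_of_real (2 * pi))"

end

theory Submission
  imports Defs
begin

text \<open>
  Write U(w) = exp(i w H). The kernel of H^n decays like K^n e^{-|x-y|/d}, so
  |U(w)_{xy} - delta_{xy}| <= (e^{K|w|} - 1) e^{-|x-y|/d}; on the other hand U(w) is unitary
  (U(-w) U(w) = U(0) = 1, by a Cauchy product of the exponential series), so its entries are
  bounded by 1. Splitting off fhat's total mass 2 pi f(0), the remaining integral of
  fhat(w) (U(w)_{xy} - delta_{xy}) is estimated by using the first bound for small |w| and the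
  second together with |fhat(w)| <= C e^{-beta |w|} / |w| for large |w|; cutting at
  |w| = max(1, |x-y|/d) / K produces the decay length d max(1, K / beta).
\<close>

section \<open>Operator norms and infinite sums of blocks\<close>

lemma norm_axis_complex_1: "norm (axis j (1::complex)) = 1"
  by (rule norm_Basis) (auto simp: Basis_vec_def)

lemma blk_norm_nonneg: "0 \<le> blk_norm A"
  unfolding blk_norm_def by (rule onorm_pos_le) simp

lemma norm_blk_apply_le: "norm (A *v v) \<le> blk_norm A * norm v"
  unfolding blk_norm_def by (rule onorm) simp

lemma norm_blk_entry_le: "cmod (A $ i $ j) \<le> blk_norm A"
proof -
  have "A $ i $ j = (A *v axis j 1) $ i"
    by (simp add: matrix_vector_mult_def axis_def if_distrib cong: if_cong)
  also have "cmod \<dots> \<le> norm (A *v axis j 1)"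
    by (rule Finite_Cartesian_Product.norm_nth_le)
  also have "\<dots> \<le> blk_norm A"
    using norm_blk_apply_le[of A "axis j 1"] by (simp add: norm_axis_complex_1)
  finally show ?thesis .
qed

lemma blk_norm_le_sum_entries: "blk_norm A \<le> (\<Sum>i\<in>UNIV. \<Sum>j\<in>UNIV. cmod (A $ i $ j))"
  unfolding blk_norm_def
proof (rule onorm_le)
  fix v :: "complex^2"
  have row: "norm ((A *v v) $ i) \<le> (\<Sum>j\<in>UNIV. cmod (A $ i $ j) * norm v)" for i
  proof -
    have "norm ((A *v v) $ i) = norm (\<Sum>j\<in>UNIV. A $ i $ j * v $ j)"
      by (simp add: matrix_vector_mult_def)
    also have "\<dots> \<le> (\<Sum>j\<in>UNIV. cmod (A $ i $ j) * cmod (v $ j))"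
      by (rule order_trans[OF norm_sum]) (simp add: norm_mult)
    also have "\<dots> \<le> (\<Sum>j\<in>UNIV. cmod (A $ i $ j) * norm v)"
      by (intro sum_mono mult_left_mono Finite_Cartesian_Product.norm_nth_le) auto
    finally show ?thesis .
  qed
  have "norm (A *v v) \<le> (\<Sum>i\<in>UNIV. norm ((A *v v) $ i))"
    unfolding norm_vec_def by (rule L2_set_le_sum) simp
  also have "\<dots> \<le> (\<Sum>i\<in>UNIV. \<Sum>j\<in>UNIV. cmod (A $ i $ j) * norm v)"
    by (intro sum_mono row)
  finally show "norm (A *v v) \<le> (\<Sum>i\<in>UNIV. \<Sum>j\<in>UNIV. cmod (A $ i $ j)) * norm v"
    by (simp add: sum_distrib_right)
qed

lemma blk_norm_mult_le: "blk_norm (A ** B) \<le> blk_norm A * blk_norm B"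
  unfolding blk_norm_def
proof (rule onorm_bound)
  show "0 \<le> onorm ((*v) A) * onorm ((*v) B)"
    using blk_norm_nonneg unfolding blk_norm_def by simp
  fix v :: "complex^2"
  have "norm ((A ** B) *v v) = norm (A *v (B *v v))"
    by (simp add: matrix_vector_mul_assoc)
  also have "\<dots> \<le> blk_norm A * (blk_norm B * norm v)"
    by (intro order_trans[OF norm_blk_apply_le] mult_left_mono norm_blk_apply_le blk_norm_nonneg)
  finally show "norm ((A ** B) *v v) \<le> onorm ((*v) A) * onorm ((*v) B) * norm v"
    by (simp add: blk_norm_def mult.assoc)
qed

lemma blk_norm_mat_1_le: "blk_norm (mat 1) \<le> 1"
  unfolding blk_norm_def by (rule onorm_bound) auto

lemma blk_norm_0 [simp]: "blk_norm 0 = 0"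
proof -
  have "(*v) (0::block) = (\<lambda>v. 0)"
    by (auto simp: fun_eq_iff vec_eq_iff matrix_vector_mult_def)
  then show ?thesis
    unfolding blk_norm_def by (simp add: onorm_zero)
qed

lemma norm_le_4_blk_norm: "norm A \<le> 4 * blk_norm A"
proof -
  have "norm A \<le> (\<Sum>i\<in>UNIV. norm (A $ i))"
    unfolding norm_vec_def by (rule L2_set_le_sum) simp
  also have "\<dots> \<le> (\<Sum>i\<in>UNIV. \<Sum>j\<in>UNIV. cmod (A $ i $ j))"
    by (intro sum_mono) (simp add: norm_vec_def L2_set_le_sum)
  also have "\<dots> \<le> (\<Sum>i\<in>(UNIV::2 set). \<Sum>j\<in>(UNIV::2 set). blk_norm A)"
    by (intro sum_mono norm_blk_entry_le)
  finally show ?thesis by simp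
qed

lemma blk_norm_le_of_entries_le:
  assumes "\<And>i j. cmod (A $ i $ j) \<le> (if i = j then \<alpha> else 0) + c"
  shows "blk_norm A \<le> 2 * \<alpha> + 4 * c"
proof -
  have "blk_norm A \<le> (\<Sum>i\<in>UNIV. \<Sum>j\<in>UNIV. cmod (A $ i $ j))"
    by (rule blk_norm_le_sum_entries)
  also have "\<dots> \<le> (\<Sum>i\<in>(UNIV::2 set). \<Sum>j\<in>UNIV. (if i = j then \<alpha> else 0) + c)"
    by (intro sum_mono) (rule assms)
  also have "\<dots> = 2 * \<alpha> + 4 * c"
    by (simp add: sum.distrib)
  finally show ?thesis .
qed

lemma blk_adj_mult: "blk_adj (A ** B) = blk_adj B ** blk_adj A"
  by (auto simp: blk_adj_def matrix_matrix_mult_def vec_eq_iff mult.commute)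

lemma blk_adj_mat_1 [simp]: "blk_adj (mat 1) = mat 1"
  and blk_adj_0 [simp]: "blk_adj 0 = 0"
  by (auto simp: blk_adj_def vec_eq_iff mat_def)

lemma blk_adj_mult_self_diag:
  "(blk_adj A ** A) $ j $ j = complex_of_real (\<Sum>k\<in>UNIV. (cmod (A $ k $ j))\<^sup>2)"
  by (simp add: matrix_matrix_mult_def blk_adj_def of_real_sum complex_norm_square mult.commute
      del: of_real_power)

lemma bounded_linear_blk_apply_left: "bounded_linear (\<lambda>B::block. B *v v)"
  unfolding linear_conv_bounded_linear[symmetric]
  by (rule linearI)
     (simp_all add: matrix_vector_mult_def vec_eq_iff sum.distrib algebra_simps scaleR_sum_right)

lemma bounded_linear_blk_mult_left: "bounded_linear (\<lambda>B::block. A ** B)"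
  unfolding linear_conv_bounded_linear[symmetric]
  by (rule linearI)
     (simp_all add: matrix_matrix_mult_def vec_eq_iff sum.distrib algebra_simps scaleR_sum_right)

lemma bounded_linear_blk_mult_right: "bounded_linear (\<lambda>A::block. A ** B)"
  unfolding linear_conv_bounded_linear[symmetric]
  by (rule linearI)
     (simp_all add: matrix_matrix_mult_def vec_eq_iff sum.distrib algebra_simps scaleR_sum_right)

lemma bounded_linear_blk_entry: "bounded_linear (\<lambda>A::block. A $ i $ j)"
  unfolding linear_conv_bounded_linear[symmetric] by (rule linearI) simp_all

lemma bounded_linear_blk_adj: "bounded_linear blk_adj"
  unfolding linear_conv_bounded_linear[symmetric]
  by (rule linearI) (simp_all add: blk_adj_def vec_eq_iff)

lemma summable_on_of_blk_norm:
  assumes "(\<lambda>z. blk_norm (F z)) summable_on A"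
  shows "F summable_on A"
proof (rule abs_summable_summable)
  have "(\<lambda>z. 4 * blk_norm (F z)) summable_on A"
    using assms by (rule summable_on_cmult_right)
  then show "(\<lambda>z. norm (F z)) summable_on A"
    by (rule summable_on_comparison_test) (auto simp: norm_le_4_blk_norm)
qed

lemma blk_norm_infsum_le:
  assumes "(\<lambda>z. blk_norm (F z)) summable_on A"
  shows "blk_norm (infsum F A) \<le> (\<Sum>\<^sub>\<infinity>z\<in>A. blk_norm (F z))"
  unfolding blk_norm_def
proof (rule onorm_le)
  fix v :: "complex^2"
  have "((\<lambda>z. F z *v v) has_sum (infsum F A *v v)) A"
    using summable_on_of_blk_norm[OF assms]
    by (intro has_sum_bounded_linear[OF bounded_linear_blk_apply_left]) auto
  moreover have "((\<lambda>z. blk_norm (F z) * norm v) has_sum ((\<Sum>\<^sub>\<infinity>z\<in>A. blk_norm (F z)) * norm v)) A"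
    using assms by (intro has_sum_cmult_left) auto
  ultimately show "norm (infsum F A *v v) \<le> (\<Sum>\<^sub>\<infinity>z\<in>A. onorm ((*v) (F z))) * norm v"
    using norm_infsum_le norm_blk_apply_le unfolding blk_norm_def by blast
qed

lemma blk_adj_infsum:
  "F summable_on A \<Longrightarrow> blk_adj (infsum F A) = (\<Sum>\<^sub>\<infinity>z\<in>A. blk_adj (F z))"
  by (metis has_sum_bounded_linear[OF bounded_linear_blk_adj] has_sum_infsum infsumI)

lemma has_sum_sum_finite:
  fixes F :: "'i \<Rightarrow> 'a \<Rightarrow> 'b::topological_comm_monoid_add"
  assumes "finite I" "\<And>i. i \<in> I \<Longrightarrow> (F i has_sum s i) A"
  shows "((\<lambda>x. \<Sum>i\<in>I. F i x) has_sum (\<Sum>i\<in>I. s i)) A"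
  using assms by (induction I rule: finite_induct) (auto intro: has_sum_add)

lemma has_sum_product_nonneg:
  fixes f g :: "_ \<Rightarrow> real"
  assumes f: "(f has_sum a) A" and g: "(g has_sum b) B"
    and f_nonneg: "\<And>x. x \<in> A \<Longrightarrow> 0 \<le> f x" and g_nonneg: "\<And>y. y \<in> B \<Longrightarrow> 0 \<le> g y"
  shows "((\<lambda>(x, y). f x * g y) has_sum (a * b)) (A \<times> B)"
proof -
  have inner: "((\<lambda>y. f x * g y) has_sum (f x * b)) B" for x
    by (rule has_sum_cmult_right[OF g])
  have outer: "((\<lambda>x. f x * b) has_sum (a * b)) A"
    by (rule has_sum_cmult_left[OF f])
  have "(\<lambda>(x, y). f x * g y) summable_on Sigma A (\<lambda>_. B)"
  proof (rule summable_on_SigmaI[where g="\<lambda>x. f x * b"])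
    show "((\<lambda>y. case (x, y) of (x, y) \<Rightarrow> f x * g y) has_sum f x * b) B" for x
      using inner by simp
    show "(\<lambda>x. f x * b) summable_on A"
      using outer by (rule has_sum_imp_summable)
    show "0 \<le> (case (x, y) of (x, y) \<Rightarrow> f x * g y)" if "x \<in> A" "y \<in> B" for x y
      using f_nonneg[OF that(1)] g_nonneg[OF that(2)] by simp
  qed
  then show ?thesis
    by (intro has_sum_SigmaI[where g="\<lambda>x. f x * b"]) (simp_all add: inner outer)
qed

lemma summable_on_product_nonneg:
  fixes f g :: "_ \<Rightarrow> real"
  assumes f: "f summable_on A" and g: "g summable_on B"
    and "\<And>x. x \<in> A \<Longrightarrow> 0 \<le> f x" and "\<And>y. y \<in> B \<Longrightarrow> 0 \<le> g y"
  shows "(\<lambda>(x, y). f x * g y) summable_on (A \<times> B)"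
  using has_sum_product_nonneg[OF has_sum_infsum[OF f] has_sum_infsum[OF g] assms(3,4)]
  by (rule has_sum_imp_summable)

lemma has_sum_product:
  fixes f g :: "_ \<Rightarrow> 'a::{real_normed_field, banach}"
  assumes f: "(f has_sum a) A" and g: "(g has_sum b) B"
    and f_abs: "(\<lambda>x. norm (f x)) summable_on A" and g_abs: "(\<lambda>y. norm (g y)) summable_on B"
  shows "((\<lambda>(x, y). f x * g y) has_sum (a * b)) (A \<times> B)"
proof -
  have "(\<lambda>(x, y). norm (f x) * norm (g y)) summable_on (A \<times> B)"
    by (rule summable_on_product_nonneg[OF f_abs g_abs]) simp_all
  then have "(\<lambda>p. norm (f (fst p) * g (snd p))) summable_on (A \<times> B)"
    by (simp add: case_prod_beta' norm_mult)
  then have "(\<lambda>p. f (fst p) * g (snd p)) summable_on Sigma A (\<lambda>_. B)"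
    by (rule abs_summable_summable)
  then have "((\<lambda>p. f (fst p) * g (snd p)) has_sum (a * b)) (Sigma A (\<lambda>_. B))"
    by (rule has_sum_SigmaI[where g="\<lambda>x. f x * b", rotated 2])
       (auto intro: has_sum_cmult_right[OF g] has_sum_cmult_left[OF f])
  then show ?thesis
    by (simp add: case_prod_beta')
qed

lemma summable_on_exp_neg_dist:
  assumes "d > 0"
  shows "(\<lambda>z::int. exp (- real_of_int \<bar>w - z\<bar> / d)) summable_on A"
proof -
  define q where "q = exp (- 1 / d)"
  have q_pow: "exp (- real_of_int \<bar>w - z\<bar> / d) = q ^ nat \<bar>w - z\<bar>" for z
    by (simp add: q_def exp_of_nat_mult[symmetric])
  have geom: "(\<lambda>n::nat. q ^ n) summable_on UNIV"
    using assms by (intro summable_nonneg_imp_summable_on summable_geometric) (auto simp: q_def)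
  have up: "(\<lambda>z. q ^ nat \<bar>w - z\<bar>) summable_on range (\<lambda>n. w + int n)"
    by (subst summable_on_reindex) (auto intro: inj_onI simp: o_def geom)
  have down: "(\<lambda>z. q ^ nat \<bar>w - z\<bar>) summable_on range (\<lambda>n. w - int n)"
    by (subst summable_on_reindex) (auto intro: inj_onI simp: o_def geom)
  have "z \<in> range (\<lambda>n. w + int n) \<union> range (\<lambda>n. w - int n)" for z
  proof (cases "w \<le> z")
    case True
    then show ?thesis by (intro UnI1 image_eqI[of _ _ "nat (z - w)"]) auto
  next
    case False
    then show ?thesis by (intro UnI2 image_eqI[of _ _ "nat (w - z)"]) auto
  qed
  then have "range (\<lambda>n. w + int n) \<union> range (\<lambda>n. w - int n) = UNIV"
    by blast
  then have "(\<lambda>z. q ^ nat \<bar>w - z\<bar>) summable_on UNIV"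
    using summable_on_union[OF up down] by simp
  then show ?thesis
    unfolding q_pow by (rule summable_on_subset_banach) simp
qed

lemma exp_neg_dist_le:
  assumes "d > 0"
  shows "exp (- real_of_int \<bar>z - y\<bar> / d) \<le> exp (real_of_int \<bar>x - z\<bar> / d) * exp (- real_of_int \<bar>x - y\<bar> / d)"
proof -
  have "- real_of_int \<bar>z - y\<bar> \<le> real_of_int \<bar>x - z\<bar> - real_of_int \<bar>x - y\<bar>"
    by linarith
  then have "- real_of_int \<bar>z - y\<bar> / d \<le> (real_of_int \<bar>x - z\<bar> - real_of_int \<bar>x - y\<bar>) / d"
    using assms by (intro divide_right_mono) auto
  then have "- real_of_int \<bar>z - y\<bar> / d \<le> real_of_int \<bar>x - z\<bar> / d + - real_of_int \<bar>x - y\<bar> / d"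
    by (simp add: diff_divide_distrib)
  then show ?thesis
    by (simp add: exp_add[symmetric])
qed

lemma mult_exp_neg_dist_le:
  assumes "0 \<le> c" "d > 0"
  shows "c * exp (- real_of_int \<bar>x - y\<bar> / d) \<le> c"
proof (rule mult_left_le[OF _ assms(1)])
  show "exp (- real_of_int \<bar>x - y\<bar> / d) \<le> 1"
    using assms(2) by simp
qed

section \<open>Powers of an exponentially decaying kernel\<close>

locale decaying_kernel =
  fixes Lam :: "int set" and H :: "int \<Rightarrow> int \<Rightarrow> block" and d K :: real
  assumes selfadj: "\<forall>x\<in>Lam. \<forall>x'\<in>Lam. H x' x = blk_adj (H x x')"
    and d_pos: "d > 0" and K_pos: "K > 0"
    and decay_summable: "\<forall>x\<in>Lam. (\<lambda>x'. blk_norm (H x x') * exp (real_of_int \<bar>x - x'\<bar> / d)) summable_on Lam"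
    and decay: "\<forall>x\<in>Lam. (\<Sum>\<^sub>\<infinity>x'\<in>Lam. blk_norm (H x x') * exp (real_of_int \<bar>x - x'\<bar> / d)) \<le> K"
begin

abbreviation "P \<equiv> ker_pow Lam H"

lemma summable_blk_norm_row: "x \<in> Lam \<Longrightarrow> (\<lambda>z. blk_norm (H x z)) summable_on Lam"
proof (rule summable_on_comparison_test[OF decay_summable[rule_format]])
  fix z
  have "1 \<le> exp (real_of_int \<bar>x - z\<bar> / d)"
    using d_pos by simp
  then show "blk_norm (H x z) \<le> blk_norm (H x z) * exp (real_of_int \<bar>x - z\<bar> / d)"
    using blk_norm_nonneg[of "H x z"] by (simp add: mult_le_cancel_left1)
qed (simp_all add: blk_norm_nonneg)

lemma summable_blk_norm_row_mult:
  assumes "x \<in> Lam" and B: "\<And>z. z \<in> Lam \<Longrightarrow> blk_norm (B z) \<le> M"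
  shows "(\<lambda>z. blk_norm (H x z ** B z)) summable_on Lam"
proof (rule summable_on_comparison_test)
  show "(\<lambda>z. blk_norm (H x z) * M) summable_on Lam"
    by (rule summable_on_cmult_left[OF summable_blk_norm_row[OF assms(1)]])
  show "blk_norm (H x z ** B z) \<le> blk_norm (H x z) * M" if "z \<in> Lam" for z
    using blk_norm_mult_le[of "H x z" "B z"] mult_left_mono[OF B[OF that] blk_norm_nonneg[of "H x z"]]
    by simp
qed (rule blk_norm_nonneg)

lemma ker_pow_decay:
  "x \<in> Lam \<Longrightarrow> y \<in> Lam \<Longrightarrow> blk_norm (P n x y) \<le> K ^ n * exp (- real_of_int \<bar>x - y\<bar> / d)"
proof (induction n arbitrary: x y)
  case 0
  then show ?case
    using blk_norm_mat_1_le by auto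
next
  case (Suc n)
  define e where "e = exp (- real_of_int \<bar>x - y\<bar> / d)"
  have term_le: "blk_norm (H x z ** P n z y) \<le> (blk_norm (H x z) * exp (real_of_int \<bar>x - z\<bar> / d)) * (K ^ n * e)"
    if "z \<in> Lam" for z
  proof -
    have "blk_norm (H x z ** P n z y) \<le> blk_norm (H x z) * (K ^ n * exp (- real_of_int \<bar>z - y\<bar> / d))"
      by (intro order_trans[OF blk_norm_mult_le] mult_left_mono Suc.IH that Suc.prems blk_norm_nonneg)
    also have "\<dots> \<le> blk_norm (H x z) * (K ^ n * (exp (real_of_int \<bar>x - z\<bar> / d) * e))"
      unfolding e_def using K_pos
      by (intro mult_left_mono exp_neg_dist_le d_pos blk_norm_nonneg) auto
    finally show ?thesis
      by (simp add: algebra_simps)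
  qed
  have row_summable: "(\<lambda>z. blk_norm (H x z ** P n z y)) summable_on Lam"
  proof (rule summable_blk_norm_row_mult[OF Suc.prems(1)])
    show "blk_norm (P n z y) \<le> K ^ n" if "z \<in> Lam" for z
      using K_pos d_pos
      by (intro order_trans[OF Suc.IH[OF that Suc.prems(2)] mult_exp_neg_dist_le]) auto
  qed
  note weights = decay_summable[rule_format, OF Suc.prems(1)]
  have "blk_norm (P (Suc n) x y) \<le> (\<Sum>\<^sub>\<infinity>z\<in>Lam. blk_norm (H x z ** P n z y))"
    using blk_norm_infsum_le[OF row_summable] by simp
  also have "\<dots> \<le> (\<Sum>\<^sub>\<infinity>z\<in>Lam. (blk_norm (H x z) * exp (real_of_int \<bar>x - z\<bar> / d)) * (K ^ n * e))"
    by (rule infsum_mono[OF row_summable summable_on_cmult_left[OF weights] term_le])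
  also have "\<dots> = (\<Sum>\<^sub>\<infinity>z\<in>Lam. blk_norm (H x z) * exp (real_of_int \<bar>x - z\<bar> / d)) * (K ^ n * e)"
    by (rule infsum_cmult_left[OF weights])
  also have "\<dots> \<le> K * (K ^ n * e)"
    using decay Suc.prems K_pos by (intro mult_right_mono) (auto simp: e_def)
  finally show ?case
    by (simp add: e_def)
qed

lemma ker_pow_bound: "x \<in> Lam \<Longrightarrow> y \<in> Lam \<Longrightarrow> blk_norm (P n x y) \<le> K ^ n"
  using K_pos d_pos by (intro order_trans[OF ker_pow_decay mult_exp_neg_dist_le]) auto

lemma summable_ker_pow_mult:
  assumes x: "x \<in> Lam" and B: "\<And>w. w \<in> Lam \<Longrightarrow> blk_norm (B w) \<le> M"
  shows "(\<lambda>w. P n x w ** B w) summable_on Lam"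
proof (rule summable_on_of_blk_norm, rule summable_on_comparison_test)
  show "(\<lambda>w. K ^ n * M * exp (- real_of_int \<bar>x - w\<bar> / d)) summable_on Lam"
    by (rule summable_on_cmult_right[OF summable_on_exp_neg_dist[OF d_pos]])
  show "blk_norm (P n x w ** B w) \<le> K ^ n * M * exp (- real_of_int \<bar>x - w\<bar> / d)"
    if w: "w \<in> Lam" for w
  proof -
    have "blk_norm (P n x w ** B w) \<le> (K ^ n * exp (- real_of_int \<bar>x - w\<bar> / d)) * M"
      by (intro order_trans[OF blk_norm_mult_le] mult_mono ker_pow_decay x w B blk_norm_nonneg)
         (use K_pos in auto)
    then show ?thesis
      by (simp add: algebra_simps)
  qed
qed (rule blk_norm_nonneg)

lemma ker_pow_1: "y \<in> Lam \<Longrightarrow> P 1 x y = H x y"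
proof -
  assume y: "y \<in> Lam"
  have "P 1 x y = (\<Sum>\<^sub>\<infinity>z\<in>Lam. H x z ** (if z = y then mat 1 else 0))"
    by simp
  also have "\<dots> = (\<Sum>\<^sub>\<infinity>z\<in>{y}. H x z ** (if z = y then mat 1 else 0))"
    by (rule infsum_cong_neutral) (use y in auto)
  finally show ?thesis
    by simp
qed

lemma summable_H_mult_ker_pow_mult_ker_pow:
  assumes x: "x \<in> Lam" and y: "y \<in> Lam"
  shows "(\<lambda>(w, z). H x w ** (P n w z ** P m z y)) summable_on Lam \<times> Lam"
proof (rule summable_on_of_blk_norm, rule summable_on_comparison_test)
  show "(\<lambda>(w, z). blk_norm (H x w) * (K ^ n * K ^ m * exp (- real_of_int \<bar>y - z\<bar> / d))) summable_on Lam \<times> Lam"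
    using summable_on_cmult_right[OF summable_on_exp_neg_dist[OF d_pos], of "K ^ n * K ^ m" y Lam] K_pos
    by (intro summable_on_product_nonneg[OF summable_blk_norm_row[OF x]]) (auto simp: blk_norm_nonneg)
  show "blk_norm ((\<lambda>(w, z). H x w ** (P n w z ** P m z y)) p)
        \<le> (\<lambda>(w, z). blk_norm (H x w) * (K ^ n * K ^ m * exp (- real_of_int \<bar>y - z\<bar> / d))) p"
    if p_mem: "p \<in> Lam \<times> Lam" for p
  proof -
    obtain w z where p: "p = (w, z)" and w: "w \<in> Lam" and z: "z \<in> Lam"
      using p_mem by (cases p) auto
    have "blk_norm (H x w ** (P n w z ** P m z y)) \<le> blk_norm (H x w) * (blk_norm (P n w z) * blk_norm (P m z y))"
      by (intro order_trans[OF blk_norm_mult_le] mult_left_mono blk_norm_mult_le blk_norm_nonneg)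
    also have "\<dots> \<le> blk_norm (H x w) * (K ^ n * (K ^ m * exp (- real_of_int \<bar>z - y\<bar> / d)))"
      using K_pos by (intro mult_left_mono mult_mono ker_pow_bound ker_pow_decay w z y blk_norm_nonneg) auto
    finally show ?thesis
      by (simp add: p mult.assoc abs_minus_commute)
  qed
qed (auto simp: blk_norm_nonneg)

lemma ker_pow_add:
  "x \<in> Lam \<Longrightarrow> y \<in> Lam \<Longrightarrow> P (n + m) x y = (\<Sum>\<^sub>\<infinity>z\<in>Lam. P n x z ** P m z y)"
proof (induction n arbitrary: x)
  case 0
  have "(\<Sum>\<^sub>\<infinity>z\<in>Lam. P 0 x z ** P m z y) = (\<Sum>\<^sub>\<infinity>z\<in>{x}. P 0 x z ** P m z y)"
    by (rule infsum_cong_neutral) (use 0 in auto)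
  then show ?case
    by simp
next
  case (Suc n)
  note x = Suc.prems(1) and y = Suc.prems(2)
  have "P (Suc n + m) x y = (\<Sum>\<^sub>\<infinity>w\<in>Lam. H x w ** P (n + m) w y)"
    by simp
  also have "\<dots> = (\<Sum>\<^sub>\<infinity>w\<in>Lam. H x w ** (\<Sum>\<^sub>\<infinity>z\<in>Lam. P n w z ** P m z y))"
    by (rule infsum_cong) (simp add: Suc.IH y)
  also have "\<dots> = (\<Sum>\<^sub>\<infinity>w\<in>Lam. \<Sum>\<^sub>\<infinity>z\<in>Lam. H x w ** (P n w z ** P m z y))"
  proof (rule infsum_cong)
    fix w assume "w \<in> Lam"
    then have "(\<lambda>z. P n w z ** P m z y) summable_on Lam"
      by (intro summable_ker_pow_mult[where M="K ^ m"] ker_pow_bound y)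
    from has_sum_bounded_linear[OF bounded_linear_blk_mult_left has_sum_infsum[OF this], of "H x w"]
    show "H x w ** (\<Sum>\<^sub>\<infinity>z\<in>Lam. P n w z ** P m z y) = (\<Sum>\<^sub>\<infinity>z\<in>Lam. H x w ** (P n w z ** P m z y))"
      by (simp add: infsumI)
  qed
  also have "\<dots> = (\<Sum>\<^sub>\<infinity>z\<in>Lam. \<Sum>\<^sub>\<infinity>w\<in>Lam. H x w ** (P n w z ** P m z y))"
    by (rule infsum_swap_banach[OF summable_H_mult_ker_pow_mult_ker_pow[OF x y]])
  also have "\<dots> = (\<Sum>\<^sub>\<infinity>z\<in>Lam. (\<Sum>\<^sub>\<infinity>w\<in>Lam. H x w ** P n w z) ** P m z y)"
  proof (rule infsum_cong)
    fix z assume "z \<in> Lam"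
    then have "(\<lambda>w. H x w ** P n w z) summable_on Lam"
      by (intro summable_on_of_blk_norm summable_blk_norm_row_mult[where M="K ^ n"] x ker_pow_bound)
    from has_sum_bounded_linear[OF bounded_linear_blk_mult_right has_sum_infsum[OF this], of "P m z y"]
    show "(\<Sum>\<^sub>\<infinity>w\<in>Lam. H x w ** (P n w z ** P m z y)) = (\<Sum>\<^sub>\<infinity>w\<in>Lam. H x w ** P n w z) ** P m z y"
      by (simp add: infsumI matrix_mul_assoc)
  qed
  also have "\<dots> = (\<Sum>\<^sub>\<infinity>z\<in>Lam. P (Suc n) x z ** P m z y)"
    by simp
  finally show ?case .
qed

lemma blk_norm_le_K: "x \<in> Lam \<Longrightarrow> y \<in> Lam \<Longrightarrow> blk_norm (H x y) \<le> K"
  using ker_pow_bound[of x y 1] by (simp only: ker_pow_1 power_one_right)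

lemma ker_pow_adj: "x \<in> Lam \<Longrightarrow> z \<in> Lam \<Longrightarrow> P n z x = blk_adj (P n x z)"
proof (induction n arbitrary: x z)
  case 0
  then show ?case
    by (cases "x = z") auto
next
  case (Suc n)
  note x = Suc.prems(1) and z = Suc.prems(2)
  have summable: "(\<lambda>w. P n x w ** H w z) summable_on Lam"
    by (intro summable_ker_pow_mult[where M=K] x blk_norm_le_K z)
  have "P (Suc n) x z = (\<Sum>\<^sub>\<infinity>w\<in>Lam. P n x w ** P 1 w z)"
    unfolding Suc_eq_plus1 by (rule ker_pow_add[OF x z])
  also have "\<dots> = (\<Sum>\<^sub>\<infinity>w\<in>Lam. P n x w ** H w z)"
    by (simp only: ker_pow_1[OF z])
  finally have "blk_adj (P (Suc n) x z) = (\<Sum>\<^sub>\<infinity>w\<in>Lam. blk_adj (P n x w ** H w z))"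
    by (simp only: blk_adj_infsum[OF summable])
  also have "\<dots> = (\<Sum>\<^sub>\<infinity>w\<in>Lam. H z w ** P n w x)"
  proof (rule infsum_cong)
    fix w assume w: "w \<in> Lam"
    show "blk_adj (P n x w ** H w z) = H z w ** P n w x"
      unfolding blk_adj_mult Suc.IH[OF x w] selfadj[rule_format, OF w z] ..
  qed
  also have "\<dots> = P (Suc n) z x"
    by simp
  finally show ?case
    by (rule sym)
qed

end

section \<open>The exponential series of the kernel\<close>

definition exp_coeff :: "real \<Rightarrow> nat \<Rightarrow> complex" where
  "exp_coeff w n = (\<i> * complex_of_real w) ^ n / of_nat (fact n)"

lemma norm_exp_coeff: "cmod (exp_coeff w n) = \<bar>w\<bar> ^ n / fact n"
  by (simp add: exp_coeff_def norm_divide norm_power norm_mult)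

lemma cnj_exp_coeff: "cnj (exp_coeff w n) = exp_coeff (- w) n"
  by (simp add: exp_coeff_def)

lemma exp_coeff_zero: "exp_coeff 0 n = (if n = 0 then 1 else 0)"
  by (simp add: exp_coeff_def)

lemma exp_coeff_add: "(\<Sum>i\<le>N. exp_coeff v i * exp_coeff w (N - i)) = exp_coeff (v + w) N"
proof -
  have scaleR_eq: "(\<i> * complex_of_real u) ^ n /\<^sub>R fact n = exp_coeff u n" for u n
    by (simp add: exp_coeff_def scaleR_conv_of_real divide_inverse mult.commute of_real_inverse)
  have "(\<i> * complex_of_real v + \<i> * complex_of_real w) ^ N /\<^sub>R fact N
      = (\<Sum>i\<le>N. ((\<i> * complex_of_real v) ^ i /\<^sub>R fact i) * ((\<i> * complex_of_real w) ^ (N - i) /\<^sub>R fact (N - i)))"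
    by (rule exp_series_add_commuting) (simp add: mult.commute)
  then show ?thesis
    by (simp only: scaleR_eq distrib_left[symmetric] of_real_add[symmetric])
qed

lemma has_sum_exp_real: "r \<ge> 0 \<Longrightarrow> ((\<lambda>n. r ^ n / fact n :: real) has_sum exp r) UNIV"
  using exp_converges[of r]
  by (intro sums_nonneg_imp_has_sum) (simp_all add: divide_inverse mult.commute)

lemma has_sum_antidiagonals:
  fixes g :: "nat \<times> nat \<Rightarrow> 'a::{topological_comm_monoid_add, t3_space}"
  assumes "(g has_sum s) UNIV"
  shows "((\<lambda>N. \<Sum>i\<le>N. g (i, N - i)) has_sum s) UNIV"
proof -
  have "bij_betw (\<lambda>q::nat \<times> nat. (snd q, fst q - snd q)) (Sigma UNIV (\<lambda>N. {..N})) UNIV"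
    by (rule bij_betwI[where g="\<lambda>p. (fst p + snd p, fst p)"]) auto
  then have "((\<lambda>q. g (snd q, fst q - snd q)) has_sum s) (Sigma UNIV (\<lambda>N. {..N}))"
    using has_sum_reindex_bij_betw assms by blast
  then show ?thesis
    by (rule has_sum_SigmaD) auto
qed

context decaying_kernel
begin

abbreviation "U \<equiv> ker_exp Lam H"

lemma norm_exp_coeff_ker_pow_le:
  assumes "x \<in> Lam" "y \<in> Lam"
  shows "cmod (exp_coeff w n * (P n x y $ i $ j))
           \<le> (\<bar>w\<bar> * K) ^ n / fact n * exp (- real_of_int \<bar>x - y\<bar> / d)"
proof -
  have "cmod (exp_coeff w n * (P n x y $ i $ j)) \<le> \<bar>w\<bar> ^ n / fact n * (K ^ n * exp (- real_of_int \<bar>x - y\<bar> / d))"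
    unfolding norm_mult norm_exp_coeff
    by (intro mult_left_mono order_trans[OF norm_blk_entry_le ker_pow_decay[OF assms]]) auto
  then show ?thesis
    by (simp add: power_mult_distrib)
qed

lemma summable_norm_exp_coeff_ker_pow:
  assumes "x \<in> Lam" "y \<in> Lam"
  shows "(\<lambda>n. cmod (exp_coeff w n * (P n x y $ i $ j))) summable_on UNIV"
proof (rule summable_on_comparison_test)
  show "(\<lambda>n. (\<bar>w\<bar> * K) ^ n / fact n * exp (- real_of_int \<bar>x - y\<bar> / d)) summable_on UNIV"
    using has_sum_exp_real[of "\<bar>w\<bar> * K"] K_pos
    by (intro summable_on_cmult_left) (auto dest: has_sum_imp_summable)
qed (use norm_exp_coeff_ker_pow_le[OF assms] in auto)

lemma has_sum_ker_exp:
  assumes "x \<in> Lam" "y \<in> Lam"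
  shows "((\<lambda>n. exp_coeff w n * (P n x y $ i $ j)) has_sum (U w x y $ i $ j)) UNIV"
proof -
  have norms: "summable (\<lambda>n. norm (exp_coeff w n * (P n x y $ i $ j)))"
    using summable_on_imp_summable[OF summable_norm_exp_coeff_ker_pow[OF assms]] by simp
  have "U w x y $ i $ j = (\<Sum>n. exp_coeff w n * (P n x y $ i $ j))"
    by (simp add: ker_exp_def exp_coeff_def)
  then show ?thesis
    using norm_summable_imp_has_sum[OF norms summable_sums[OF summable_norm_cancel[OF norms]]] by simp
qed

lemma ker_exp_zero: "x \<in> Lam \<Longrightarrow> y \<in> Lam \<Longrightarrow> U 0 x y = P 0 x y"
proof -
  assume xy: "x \<in> Lam" "y \<in> Lam"
  have "((\<lambda>n. exp_coeff 0 n * (P n x y $ i $ j)) has_sum (P 0 x y $ i $ j)) UNIV" for i j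
    by (rule has_sum_finite_neutralI[where B="{0}"]) (auto simp: exp_coeff_zero)
  then have "U 0 x y $ i $ j = P 0 x y $ i $ j" for i j
    by (rule has_sum_unique[OF has_sum_ker_exp[OF xy]])
  then show ?thesis
    by (simp add: vec_eq_iff)
qed

lemma ker_exp_adj:
  assumes x: "x \<in> Lam" and z: "z \<in> Lam"
  shows "U (- w) x z = blk_adj (U w z x)"
proof -
  have "U (- w) x z $ a $ b = cnj (U w z x $ b $ a)" for a b
  proof (rule has_sum_unique[OF has_sum_ker_exp[OF x z]])
    have "((\<lambda>n. cnj (exp_coeff w n * (P n z x $ b $ a))) has_sum cnj (U w z x $ b $ a)) UNIV"
      by (rule has_sum_bounded_linear[OF bounded_linear_cnj has_sum_ker_exp[OF z x]])
    moreover have "cnj (exp_coeff w n * (P n z x $ b $ a)) = exp_coeff (- w) n * (P n x z $ a $ b)" for n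
      using ker_pow_adj[OF z x, of n] by (simp add: cnj_exp_coeff blk_adj_def)
    ultimately show "((\<lambda>n. exp_coeff (- w) n * (P n x z $ a $ b)) has_sum cnj (U w z x $ b $ a)) UNIV"
      by simp
  qed
  then show ?thesis
    by (simp add: blk_adj_def vec_eq_iff)
qed

lemma has_sum_ker_exp_mult_over_exponents:
  assumes x: "x \<in> Lam" and z: "z \<in> Lam" and y: "y \<in> Lam"
  shows "((\<lambda>(n, m). exp_coeff v n * exp_coeff w m * (P n x z ** P m z y) $ i $ j)
           has_sum (U v x z ** U w z y) $ i $ j) UNIV"
proof -
  have "((\<lambda>(n, m). (exp_coeff v n * (P n x z $ i $ k)) * (exp_coeff w m * (P m z y $ k $ j)))
          has_sum (U v x z $ i $ k * U w z y $ k $ j)) (UNIV \<times> UNIV)" for k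
    by (intro has_sum_product has_sum_ker_exp summable_norm_exp_coeff_ker_pow x y z)
  then have "((\<lambda>p. \<Sum>k\<in>UNIV. (\<lambda>(n, m). (exp_coeff v n * (P n x z $ i $ k)) * (exp_coeff w m * (P m z y $ k $ j))) p)
          has_sum (\<Sum>k\<in>UNIV. U v x z $ i $ k * U w z y $ k $ j)) UNIV"
    by (intro has_sum_sum_finite) auto
  then show ?thesis
    by (simp add: matrix_matrix_mult_def sum_distrib_left mult_ac case_prod_beta')
qed

lemma summable_ker_pow_mult_quadruple_series:
  assumes x: "x \<in> Lam" and y: "y \<in> Lam"
  shows "(\<lambda>(z, n, m). exp_coeff v n * exp_coeff w m * (P n x z ** P m z y) $ i $ j)
           summable_on Lam \<times> UNIV"
proof -
  define e where "e u n = (\<bar>u\<bar> * K) ^ n / fact n" for u :: real and n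
  have e_nonneg: "0 \<le> e u n" for u n
    using K_pos by (simp add: e_def)
  have e_summable: "e u summable_on UNIV" for u
    unfolding e_def using has_sum_exp_real[of "\<bar>u\<bar> * K"] K_pos by (auto dest: has_sum_imp_summable)
  have "(\<lambda>(n, m). e v n * e w m) summable_on UNIV \<times> UNIV"
    by (rule summable_on_product_nonneg[OF e_summable e_summable]) (simp_all add: e_nonneg)
  then have "(\<lambda>(z, p). exp (- real_of_int \<bar>x - z\<bar> / d) * (\<lambda>(n, m). e v n * e w m) p) summable_on Lam \<times> UNIV"
    by (intro summable_on_product_nonneg[OF summable_on_exp_neg_dist[OF d_pos]])
       (auto simp: e_nonneg)
  then have "(\<lambda>(z, n, m). exp (- real_of_int \<bar>x - z\<bar> / d) * (e v n * e w m)) summable_on Lam \<times> UNIV"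
    by (simp add: case_prod_beta')
  then show ?thesis
  proof (rule abs_summable_summable[OF summable_on_comparison_test])
    fix q :: "int \<times> nat \<times> nat"
    assume "q \<in> Lam \<times> UNIV"
    then obtain z n m where q: "q = (z, n, m)" and z: "z \<in> Lam"
      by (cases q) auto
    have "cmod ((P n x z ** P m z y) $ i $ j) \<le> (K ^ n * exp (- real_of_int \<bar>x - z\<bar> / d)) * K ^ m"
      using K_pos
      by (intro order_trans[OF norm_blk_entry_le order_trans[OF blk_norm_mult_le]]
            mult_mono ker_pow_decay ker_pow_bound x y z blk_norm_nonneg) auto
    then have "\<bar>v\<bar> ^ n / fact n * (\<bar>w\<bar> ^ m / fact m) * cmod ((P n x z ** P m z y) $ i $ j)
               \<le> \<bar>v\<bar> ^ n / fact n * (\<bar>w\<bar> ^ m / fact m) * ((K ^ n * exp (- real_of_int \<bar>x - z\<bar> / d)) * K ^ m)"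
      by (intro mult_left_mono) auto
    then show "norm ((\<lambda>(z, n, m). exp_coeff v n * exp_coeff w m * (P n x z ** P m z y) $ i $ j) q)
               \<le> (\<lambda>(z, n, m). exp (- real_of_int \<bar>x - z\<bar> / d) * (e v n * e w m)) q"
      by (simp add: q norm_mult norm_exp_coeff e_def power_mult_distrib mult_ac)
  qed auto
qed

lemma has_sum_ker_pow_mult_over_sites:
  assumes x: "x \<in> Lam" and y: "y \<in> Lam"
  shows "((\<lambda>z. exp_coeff v n * exp_coeff w m * (P n x z ** P m z y) $ i $ j)
           has_sum exp_coeff v n * exp_coeff w m * P (n + m) x y $ i $ j) Lam"
proof -
  have "(\<lambda>z. P n x z ** P m z y) summable_on Lam"
    by (intro summable_ker_pow_mult[where M="K ^ m"] x ker_pow_bound y)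
  from has_sum_bounded_linear[OF bounded_linear_blk_entry has_sum_infsum[OF this], of i j]
  show ?thesis
    unfolding ker_pow_add[OF x y] by (rule has_sum_cmult_right)
qed

text \<open>Group law U(v) U(w) = U(v + w): the absolutely convergent series over sites and both
  exponents is summed in the two orders; regrouping the exponents along antidiagonals
  gives the exponential series of U(v + w).\<close>

lemma has_sum_ker_exp_mult:
  assumes x: "x \<in> Lam" and y: "y \<in> Lam"
  shows "((\<lambda>z. (U v x z ** U w z y) $ i $ j) has_sum U (v + w) x y $ i $ j) Lam"
proof -
  define T where "T = (\<lambda>(z, n, m). exp_coeff v n * exp_coeff w m * (P n x z ** P m z y) $ i $ j)"
  obtain S where S: "(T has_sum S) (Lam \<times> UNIV)"
    using summable_ker_pow_mult_quadruple_series[OF x y] unfolding summable_on_def T_def by blast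
  have by_site: "((\<lambda>z. (U v x z ** U w z y) $ i $ j) has_sum S) Lam"
    by (rule has_sum_SigmaD[OF S]) (use has_sum_ker_exp_mult_over_exponents[OF x _ y] in \<open>simp add: T_def\<close>)
  have "((\<lambda>(p, z). T (z, p)) has_sum S) (UNIV \<times> Lam)"
    using S has_sum_swap by blast
  then have by_exponents: "((\<lambda>(n, m). exp_coeff v n * exp_coeff w m * P (n + m) x y $ i $ j) has_sum S) UNIV"
  proof (rule has_sum_SigmaD)
    fix p :: "nat \<times> nat"
    show "((\<lambda>z. (\<lambda>(p, z). T (z, p)) (p, z)) has_sum (\<lambda>(n, m). exp_coeff v n * exp_coeff w m * P (n + m) x y $ i $ j) p) Lam"
      using has_sum_ker_pow_mult_over_sites[OF x y] by (cases p) (simp add: T_def)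
  qed
  have antidiagonal: "(\<Sum>k\<le>N. (\<lambda>(n, m). exp_coeff v n * exp_coeff w m * P (n + m) x y $ i $ j) (k, N - k))
      = exp_coeff (v + w) N * (P N x y $ i $ j)" for N
  proof -
    have "(\<Sum>k\<le>N. (\<lambda>(n, m). exp_coeff v n * exp_coeff w m * P (n + m) x y $ i $ j) (k, N - k))
        = (\<Sum>k\<le>N. exp_coeff v k * exp_coeff w (N - k)) * (P N x y $ i $ j)"
      unfolding sum_distrib_right by (intro sum.cong) auto
    then show ?thesis
      by (simp only: exp_coeff_add)
  qed
  have "((\<lambda>N. exp_coeff (v + w) N * (P N x y $ i $ j)) has_sum S) UNIV"
    using has_sum_antidiagonals[OF by_exponents] by (simp only: antidiagonal)
  then have "S = U (v + w) x y $ i $ j"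
    by (rule has_sum_unique[OF _ has_sum_ker_exp[OF x y]])
  then show ?thesis
    using by_site by simp
qed

text \<open>Unitarity, U(-w) U(w) = U(0) = 1, makes every column of U(w) a unit vector.\<close>

lemma norm_ker_exp_entry_le_1:
  assumes x: "x \<in> Lam" and y: "y \<in> Lam"
  shows "cmod (U w x y $ i $ j) \<le> 1"
proof -
  define q where "q z = (\<Sum>k\<in>UNIV. (cmod (U w z y $ k $ j))\<^sup>2)" for z
  have column: "(U (- w) y z ** U w z y) $ j $ j = complex_of_real (q z)" if "z \<in> Lam" for z
    unfolding ker_exp_adj[OF y that] q_def by (rule blk_adj_mult_self_diag)
  have "((\<lambda>z. complex_of_real (q z)) has_sum 1) Lam \<longleftrightarrow> ((\<lambda>z. (U (- w) y z ** U w z y) $ j $ j) has_sum 1) Lam"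
    by (rule has_sum_cong) (simp add: column)
  then have "((\<lambda>z. complex_of_real (q z)) has_sum 1) Lam"
    using has_sum_ker_exp_mult[OF y y, of "- w" w j j] ker_exp_zero[OF y y] by (simp add: mat_def)
  from has_sum_bounded_linear[OF bounded_linear_Re this]
  have q_sum: "(q has_sum 1) Lam"
    by simp
  have q_nonneg: "0 \<le> q z" for z
    unfolding q_def by (intro sum_nonneg) auto
  have "(cmod (U w x y $ i $ j))\<^sup>2 \<le> q x"
    unfolding q_def by (rule member_le_sum) auto
  also have "q x \<le> 1"
    using has_sum_mono_neutral[OF has_sum_finite[of "{x}" q] q_sum] x q_nonneg by auto
  finally show ?thesis
    by (simp add: power_le_one_iff abs_square_le_1)
qed

lemma norm_ker_exp_sub_le:
  assumes x: "x \<in> Lam" and y: "y \<in> Lam"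
  shows "cmod (U w x y $ i $ j - P 0 x y $ i $ j) \<le> (exp (\<bar>w\<bar> * K) - 1) * exp (- real_of_int \<bar>x - y\<bar> / d)"
proof -
  define c where "c = exp (- real_of_int \<bar>x - y\<bar> / d)"
  have rK: "0 \<le> \<bar>w\<bar> * K"
    using K_pos by simp
  have "((\<lambda>n. exp_coeff w n * (P n x y $ i $ j)) has_sum U w x y $ i $ j - exp_coeff w 0 * (P 0 x y $ i $ j))
          (UNIV - {0})"
    using has_sum_Diff[OF has_sum_ker_exp[OF x y, of w i j] has_sum_finite[of "{0}"]]
    by (simp del: ker_pow.simps)
  moreover have "((\<lambda>n. (\<bar>w\<bar> * K) ^ n / fact n * c) has_sum exp (\<bar>w\<bar> * K) * c - 1 * c) (UNIV - {0})"
    using has_sum_Diff[OF has_sum_cmult_left[OF has_sum_exp_real[OF rK]] has_sum_finite[of "{0}"], of c]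
    by simp
  ultimately have "cmod (U w x y $ i $ j - exp_coeff w 0 * (P 0 x y $ i $ j)) \<le> exp (\<bar>w\<bar> * K) * c - 1 * c"
    by (rule norm_infsum_le) (use norm_exp_coeff_ker_pow_le[OF x y] in \<open>simp add: c_def\<close>)
  then show ?thesis
    by (simp add: c_def exp_coeff_def algebra_simps del: ker_pow.simps)
qed

lemma borel_measurable_ker_exp_entry:
  assumes x: "x \<in> Lam" and y: "y \<in> Lam"
  shows "(\<lambda>w. U w x y $ i $ j) \<in> borel_measurable borel"
proof (rule borel_measurable_LIMSEQ_metric[where f="\<lambda>N w. \<Sum>n<N. exp_coeff w n * (P n x y $ i $ j)"])
  show "(\<lambda>w. \<Sum>n<N. exp_coeff w n * (P n x y $ i $ j)) \<in> borel_measurable borel" for N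
    unfolding exp_coeff_def by measurable
  show "(\<lambda>N. \<Sum>n<N. exp_coeff w n * (P n x y $ i $ j)) \<longlonglongrightarrow> U w x y $ i $ j" for w
    using has_sum_imp_sums[OF has_sum_ker_exp[OF x y]] by (simp add: sums_def)
qed

end

lemma exp_one_minus_inverse_le: "1 \<le> (b::real) \<Longrightarrow> exp (1 - 1 / b) \<le> b"
proof -
  assume b: "1 \<le> b"
  have "ln (1 / b) \<le> 1 / b - 1"
    by (rule ln_le_minus_one) (use b in auto)
  then have "1 - 1 / b \<le> ln b"
    using b by (simp add: ln_div)
  then have "exp (1 - 1 / b) \<le> exp (ln b)"
    by simp
  then show ?thesis
    using b by simp
qed

lemma mult_le_pi_mult: "0 \<le> s \<Longrightarrow> x \<le> s \<Longrightarrow> 0 \<le> e \<Longrightarrow> x * e \<le> pi * s * (e::real)"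
proof -
  assume s: "0 \<le> s" and x: "x \<le> s" and e: "0 \<le> e"
  have "x * e \<le> s * e"
    using x e by (rule mult_right_mono)
  also have "\<dots> \<le> pi * s * e"
    using s e pi_ge_two by (intro mult_right_mono) (auto intro: mult_right_mono[of 1 pi s, simplified])
  finally show ?thesis .
qed

lemma split_bound_far:
  fixes a b :: real
  assumes a: "1 \<le> a" and b: "1 / 2 < b"
  shows "a * exp (- a) * max 1 (exp (a - a / b)) + b / a * exp (- (a / b)) \<le> pi * (b + a) * exp (- a / max 1 b)"
proof (cases "b \<le> 1")
  case True
  have "a - a / b \<le> 0" and "a \<le> a / b"
    using a b True by (simp_all add: field_simps)
  then have "max 1 (exp (a - a / b)) = 1" and "exp (- (a / b)) \<le> exp (- a)"
    by simp_all
  moreover have "b / a \<le> b"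
    using a b by (simp add: field_simps)
  ultimately have "a * exp (- a) * max 1 (exp (a - a / b)) + b / a * exp (- (a / b)) \<le> (a + b) * exp (- a)"
    using a b mult_mono[of "b / a" b "exp (- (a / b))" "exp (- a)"] by (simp add: algebra_simps)
  also have "\<dots> \<le> pi * (b + a) * exp (- a)"
    using a b by (intro mult_le_pi_mult) auto
  finally show ?thesis
    using True by simp
next
  case False
  have "0 \<le> a - a / b"
    using a False by (simp add: field_simps)
  then have max_eq: "max 1 (exp (a - a / b)) = exp (a - a / b)"
    by simp
  have exp_eq: "a * exp (- a) * exp (a - a / b) = a * exp (- (a / b))"
    by (simp add: exp_add[symmetric])
  have "b / a * exp (- (a / b)) \<le> b * exp (- (a / b))"
    using a False by (intro mult_right_mono) (auto simp: field_simps)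
  then have "a * exp (- a) * max 1 (exp (a - a / b)) + b / a * exp (- (a / b)) \<le> (a + b) * exp (- (a / b))"
    unfolding max_eq exp_eq by (simp add: algebra_simps)
  also have "\<dots> \<le> pi * (b + a) * exp (- (a / b))"
    using a False by (intro mult_le_pi_mult) auto
  finally show ?thesis
    using False by simp
qed

lemma split_bound_near:
  fixes a b :: real
  assumes a: "0 \<le> a" "a < 1" and b: "1 / 2 < b"
  shows "exp (- a) * max 1 (exp (1 - 1 / b)) + b * exp (- (1 / b)) \<le> pi * (b + a) * exp (- a / max 1 b)"
proof (cases "b \<le> 1")
  case True
  have "1 - 1 / b \<le> 0"
    using True b by (simp add: field_simps)
  then have max_eq: "max 1 (exp (1 - 1 / b)) = 1"
    by simp
  have "a * b \<le> 1"
    using mult_le_one[of a b] a True b by auto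
  then have "a \<le> 1 / b"
    using b by (simp add: field_simps)
  then have "b * exp (- (1 / b)) \<le> b * exp (- a)"
    using b by simp
  then have "exp (- a) * max 1 (exp (1 - 1 / b)) + b * exp (- (1 / b)) \<le> (1 + b) * exp (- a)"
    unfolding max_eq by (simp add: algebra_simps)
  also have "\<dots> \<le> pi * (b + a) * exp (- a)"
  proof (rule mult_right_mono)
    have "1 + b \<le> 3 * b"
      using b by simp
    also have "\<dots> \<le> pi * b"
      using b pi_gt3 by simp
    also have "\<dots> \<le> pi * (b + a)"
      using a pi_gt3 by simp
    finally show "1 + b \<le> pi * (b + a)" .
  qed simp
  finally show ?thesis
    using True by simp
next
  case False
  have "a * 1 \<le> a * b"
    using False a by (intro mult_left_mono) auto
  then have "a / b \<le> a"
    using False by (simp add: field_simps)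
  then have "exp (- a) \<le> exp (- (a / b))"
    by simp
  moreover have "exp (1 - 1 / b) \<le> b" and "1 \<le> exp (1 - 1 / b)"
    using False exp_one_minus_inverse_le[of b] by (simp_all add: field_simps)
  ultimately have "exp (- a) * max 1 (exp (1 - 1 / b)) \<le> exp (- (a / b)) * b"
    by (intro mult_mono) auto
  moreover have "a / b \<le> 1 / b"
    using a False by (simp add: divide_right_mono)
  then have "b * exp (- (1 / b)) \<le> b * exp (- (a / b))"
    using False by simp
  ultimately have "exp (- a) * max 1 (exp (1 - 1 / b)) + b * exp (- (1 / b)) \<le> 2 * b * exp (- (a / b))"
    by (simp add: algebra_simps)
  also have "\<dots> \<le> pi * (b + a) * exp (- (a / b))"
    using False a pi_gt3 by (intro mult_right_mono mult_mono) auto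
  finally show ?thesis
    using False by simp
qed

lemma split_bound_diagonal:
  fixes b :: real
  assumes b: "1 / 2 < b"
  shows "max 1 (exp (1 - 1 / b)) + 2 * b * exp (- (1 / b)) \<le> pi * b"
proof (cases "b \<le> 1")
  case True
  have "1 - 1 / b \<le> 0" and "1 \<le> 1 / b"
    using True b by (simp_all add: field_simps)
  then have max_eq: "max 1 (exp (1 - 1 / b)) = 1"
    by simp
  from \<open>1 \<le> 1 / b\<close> have "exp (- (1 / b)) \<le> exp (- 1)"
    by simp
  also have "exp (- 1) \<le> (1 / 2 :: real)"
    using exp_ge_add_one_self[of 1] by (simp add: exp_minus field_simps)
  finally have "2 * b * exp (- (1 / b)) \<le> 2 * b * (1 / 2)"
    using b by (intro mult_left_mono) auto
  then have "max 1 (exp (1 - 1 / b)) + 2 * b * exp (- (1 / b)) \<le> 3 * b"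
    unfolding max_eq using b by linarith
  also have "\<dots> \<le> pi * b"
    using pi_gt3 b by simp
  finally show ?thesis .
next
  case False
  have "max 1 (exp (1 - 1 / b)) \<le> b" and "2 * b * exp (- (1 / b)) \<le> 2 * b"
    using exp_one_minus_inverse_le[of b] False by simp_all
  then have "max 1 (exp (1 - 1 / b)) + 2 * b * exp (- (1 / b)) \<le> 3 * b"
    by linarith
  also have "\<dots> \<le> pi * b"
    using pi_gt3 False by simp
  finally show ?thesis .
qed

lemma split_bound:
  fixes a b M :: real
  assumes a: "0 \<le> a" and b: "1 / 2 < b" and M: "M = 1 \<or> (M = 2 \<and> a = 0)"
  defines "A \<equiv> max a 1"
  shows "A * exp (- a) * max 1 (exp (A - A / b)) + M * b / A * exp (- (A / b)) \<le> pi * (b + a) * exp (- a / max 1 b)"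
proof (cases "1 \<le> a")
  case True
  then have "M = 1" and "A = a"
    using M by (auto simp: A_def)
  then show ?thesis
    using split_bound_far[OF True b] by simp
next
  case False
  then have A: "A = 1"
    by (simp add: A_def)
  show ?thesis
    using M
  proof
    assume "M = 1"
    then show ?thesis
      using split_bound_near[OF a _ b] False A by simp
  next
    assume "M = 2 \<and> a = 0"
    then show ?thesis
      using split_bound_diagonal[OF b] A by simp
  qed
qed

section \<open>The integral of the Fourier majorant\<close>

lemma nn_integral_exp_tail:
  assumes l: "l > 0" and c: "c \<ge> 0"
  shows "(\<integral>\<^sup>+ t. ennreal (c * exp (- l * t)) * indicator {T..} t \<partial>lborel) = ennreal (c * exp (- l * T) / l)"
proof -
  have "LIM t at_top. (- l) * t :> at_bot"
    by (rule filterlim_tendsto_neg_mult_at_bot[OF tendsto_const _ filterlim_ident]) (use l in auto)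
  then have "((\<lambda>t. exp (- l * t)) \<longlongrightarrow> 0) at_top"
    using filterlim_compose[OF exp_at_bot] by blast
  then have "((\<lambda>t. - c / l * exp (- l * t)) \<longlongrightarrow> 0) at_top"
    using tendsto_mult_right_zero by blast
  then have "(\<integral>\<^sup>+ t. ennreal (c * exp (- l * t)) * indicator {T..} t \<partial>lborel) = 0 - (- c / l * exp (- l * T))"
    using l c by (intro nn_integral_FTC_atLeast) (auto intro!: derivative_eq_intros simp: field_simps)
  then show ?thesis
    by simp
qed

lemma nn_integral_abs_le:
  fixes g :: "real \<Rightarrow> ennreal"
  assumes [measurable]: "g \<in> borel_measurable borel"
  shows "(\<integral>\<^sup>+ w. g \<bar>w\<bar> \<partial>lborel) \<le> 2 * (\<integral>\<^sup>+ t. g t * indicator {0..} t \<partial>lborel)"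
proof -
  have "(\<integral>\<^sup>+ w. g \<bar>w\<bar> \<partial>lborel)
      \<le> (\<integral>\<^sup>+ w. g w * indicator {0..} w + g (- w) * indicator {0..} (- w) \<partial>lborel)"
    by (intro nn_integral_mono) (auto simp: indicator_def)
  also have "\<dots> = (\<integral>\<^sup>+ w. g w * indicator {0..} w \<partial>lborel) + (\<integral>\<^sup>+ w. g (- w) * indicator {0..} (- w) \<partial>lborel)"
    by (rule nn_integral_add) auto
  also have "(\<integral>\<^sup>+ w. g (- w) * indicator {0..} (- w) \<partial>lborel) = (\<integral>\<^sup>+ w. g w * indicator {0..} w \<partial>lborel)"
    using nn_integral_real_affine[of "\<lambda>w. g w * indicator {0..} w" "-1" 0] by simp
  finally show ?thesis
    by (simp add: mult_2)
qed

text \<open>The integrand C e^(-beta t) / t * min M ((e^(K t) - 1) e^(-a)) bounds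
  |fhat w| |exp(i w H)_{xy} - delta_xy| at t = |w|, with a = |x - y| / d.\<close>

definition fourier_majorant :: "real \<Rightarrow> real \<Rightarrow> real \<Rightarrow> real \<Rightarrow> real \<Rightarrow> real \<Rightarrow> real" where
  "fourier_majorant C \<beta> K a M t =
     (if t \<le> 0 then 0 else C * exp (- \<beta> * t) / t * min M ((exp (K * t) - 1) * exp (- a)))"

lemma fourier_majorant_pos:
  "t > 0 \<Longrightarrow> fourier_majorant C \<beta> K a M t = C * exp (- \<beta> * t) / t * min M ((exp (K * t) - 1) * exp (- a))"
  by (simp add: fourier_majorant_def)

lemma fourier_majorant_le_exp:
  assumes "C \<ge> 0" "K \<ge> 0" "M \<ge> 0" "t > 0"
  shows "fourier_majorant C \<beta> K a M t \<le> C * K * exp (- a) * exp ((K - \<beta>) * t)"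
proof -
  have "1 - K * t \<le> exp (- (K * t))"
    using exp_ge_add_one_self[of "- (K * t)"] by simp
  then have "(1 - K * t) * exp (K * t) \<le> exp (- (K * t)) * exp (K * t)"
    by (intro mult_right_mono) auto
  then have exp_sub: "exp (K * t) - 1 \<le> K * t * exp (K * t)"
    by (simp add: exp_minus field_simps)
  have "fourier_majorant C \<beta> K a M t \<le> C * exp (- \<beta> * t) / t * ((exp (K * t) - 1) * exp (- a))"
    unfolding fourier_majorant_pos[OF \<open>t > 0\<close>] using assms by (intro mult_left_mono divide_nonneg_nonneg) auto
  also have "\<dots> \<le> C * exp (- \<beta> * t) / t * ((K * t * exp (K * t)) * exp (- a))"
    using assms exp_sub by (intro mult_left_mono mult_right_mono divide_nonneg_nonneg) auto
  also have "\<dots> = C * K * exp (- a) * exp ((K - \<beta>) * t)"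
    using assms by (simp add: field_simps exp_add[symmetric] left_diff_distrib)
  finally show ?thesis .
qed

lemma fourier_majorant_le_tail:
  assumes "C \<ge> 0" "M \<ge> 0" "T > 0" "t \<ge> T"
  shows "fourier_majorant C \<beta> K a M t \<le> C * M / T * exp (- \<beta> * t)"
proof -
  have "fourier_majorant C \<beta> K a M t \<le> C * exp (- \<beta> * t) / t * M"
    unfolding fourier_majorant_pos[OF less_le_trans[OF \<open>T > 0\<close> \<open>t \<ge> T\<close>]] using assms by (intro mult_left_mono divide_nonneg_nonneg) auto
  also have "\<dots> \<le> C * exp (- \<beta> * t) / T * M"
    using assms by (intro mult_right_mono divide_left_mono) auto
  finally show ?thesis
    by (simp add: field_simps)
qed

lemma nn_integral_fourier_majorant_weak:
  assumes C: "C > 0" and K: "K > 0" and a: "a \<ge> 0" and M: "M \<ge> 0" and weak: "2 * K \<le> \<beta>"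
  shows "(\<integral>\<^sup>+ w. ennreal (fourier_majorant C \<beta> K a M \<bar>w\<bar>) \<partial>lborel)
           \<le> ennreal (2 * (pi * C * (K / \<beta> + a) * exp (- a / max 1 (K / \<beta>))))"
proof -
  define G where "G t = C * K * exp (- a) * exp (- (\<beta> - K) * t)" for t
  have "(\<integral>\<^sup>+ w. ennreal (fourier_majorant C \<beta> K a M \<bar>w\<bar>) \<partial>lborel) \<le> (\<integral>\<^sup>+ w. ennreal (G \<bar>w\<bar>) \<partial>lborel)"
  proof (intro nn_integral_mono ennreal_leI)
    fix w :: real
    show "fourier_majorant C \<beta> K a M \<bar>w\<bar> \<le> G \<bar>w\<bar>"
      using fourier_majorant_le_exp[of C K M "\<bar>w\<bar>" \<beta> a] C K M
      by (cases "w = 0") (auto simp: fourier_majorant_def G_def algebra_simps)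
  qed
  also have "\<dots> \<le> 2 * (\<integral>\<^sup>+ t. ennreal (G t) * indicator {0..} t \<partial>lborel)"
    by (rule nn_integral_abs_le) (simp add: G_def)
  also have "(\<integral>\<^sup>+ t. ennreal (G t) * indicator {0..} t \<partial>lborel) = ennreal (C * K * exp (- a) / (\<beta> - K))"
    unfolding G_def using nn_integral_exp_tail[of "\<beta> - K" "C * K * exp (- a)" 0] weak C K by simp
  also have "2 * ennreal (C * K * exp (- a) / (\<beta> - K)) = ennreal (2 * (C * K * exp (- a) / (\<beta> - K)))"
    using C K weak by (subst ennreal_mult) auto
  also have "\<dots> \<le> ennreal (2 * (pi * C * (K / \<beta> + a) * exp (- a / max 1 (K / \<beta>))))"
  proof (intro ennreal_leI mult_left_mono)
    have "max 1 (K / \<beta>) = 1"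
      using weak K by (auto simp: field_simps)
    have "C * K * exp (- a) / (\<beta> - K) \<le> C * K * exp (- a) / (\<beta> / 2)"
      using C K weak by (intro divide_left_mono) auto
    also have "\<dots> = 2 * C * (K / \<beta>) * exp (- a)"
      by (simp add: field_simps)
    also have "\<dots> \<le> pi * C * (K / \<beta> + a) * exp (- a)"
      using pi_ge_two C K weak a by (intro mult_right_mono mult_mono) auto
    finally show "C * K * exp (- a) / (\<beta> - K) \<le> pi * C * (K / \<beta> + a) * exp (- a / max 1 (K / \<beta>))"
      using \<open>max 1 (K / \<beta>) = 1\<close> by simp
  qed simp
  finally show ?thesis .
qed

text \<open>For strong coupling the majorant is split at T = max a 1 / K into its exponential bound
  near 0 and its 1/t bound in the tail.\<close>

lemma nn_integral_fourier_majorant_strong: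
  assumes C: "C > 0" and \<beta>: "\<beta> > 0" and K: "K > 0" and a: "a \<ge> 0"
    and M: "M = 1 \<or> (M = 2 \<and> a = 0)" and strong: "\<beta> < 2 * K"
  shows "(\<integral>\<^sup>+ w. ennreal (fourier_majorant C \<beta> K a M \<bar>w\<bar>) \<partial>lborel)
           \<le> ennreal (2 * (pi * C * (K / \<beta> + a) * exp (- a / max 1 (K / \<beta>))))"
proof -
  define b where "b = K / \<beta>"
  define A where "A = max a 1"
  define T where "T = A / K"
  define c where "c = C * K * exp (- a) * max 1 (exp ((K - \<beta>) * T))"
  define G where "G t = ennreal c * indicator {0..T} t + ennreal (C * M / T * exp (- \<beta> * t)) * indicator {T..} t"
    for t
  have T: "T > 0" and c: "c \<ge> 0" and M_nonneg: "M \<ge> 0" and b: "1 / 2 < b"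
    using K C M \<beta> strong by (auto simp: T_def A_def c_def b_def field_simps)
  have "ennreal (fourier_majorant C \<beta> K a M t) \<le> G t" if "t \<ge> 0" for t
  proof (cases "t \<le> T")
    case True
    have "exp ((K - \<beta>) * t) \<le> max 1 (exp ((K - \<beta>) * T))"
      using True that by (cases "K \<le> \<beta>") (auto simp: mult_nonpos_nonneg intro: mult_left_mono)
    then have "fourier_majorant C \<beta> K a M t \<le> c"
      using fourier_majorant_le_exp[of C K M t \<beta> a] C K M_nonneg
      by (cases "t = 0") (auto simp: fourier_majorant_def c_def intro: order_trans mult_left_mono)
    then show ?thesis
      using True that by (auto simp: G_def intro: add_increasing2 ennreal_leI)
  next
    case False
    then show ?thesis
      using fourier_majorant_le_tail[of C M T t \<beta> K a] C M_nonneg T by (simp add: G_def ennreal_leI)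
  qed
  then have "(\<integral>\<^sup>+ w. ennreal (fourier_majorant C \<beta> K a M \<bar>w\<bar>) \<partial>lborel) \<le> (\<integral>\<^sup>+ w. G \<bar>w\<bar> \<partial>lborel)"
    by (intro nn_integral_mono) simp
  also have "\<dots> \<le> 2 * (\<integral>\<^sup>+ t. G t * indicator {0..} t \<partial>lborel)"
    by (rule nn_integral_abs_le) (simp add: G_def)
  also have "(\<integral>\<^sup>+ t. G t * indicator {0..} t \<partial>lborel) \<le> (\<integral>\<^sup>+ t. G t \<partial>lborel)"
    by (intro nn_integral_mono) (auto simp: indicator_def)
  also have "(\<integral>\<^sup>+ t. G t \<partial>lborel) = (\<integral>\<^sup>+ t. ennreal c * indicator {0..T} t \<partial>lborel)
      + (\<integral>\<^sup>+ t. ennreal (C * M / T * exp (- \<beta> * t)) * indicator {T..} t \<partial>lborel)"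
    unfolding G_def by (rule nn_integral_add) auto
  also have "\<dots> = ennreal (c * T + C * M / T * exp (- \<beta> * T) / \<beta>)"
    using nn_integral_exp_tail[of \<beta> "C * M / T" T] T c \<beta> C M_nonneg
    by (simp add: nn_integral_cmult_indicator ennreal_mult ennreal_plus)
  also have "2 * \<dots> = ennreal (2 * (c * T + C * M / T * exp (- \<beta> * T) / \<beta>))"
    using T c \<beta> C M_nonneg by (subst ennreal_mult) auto
  also have "\<dots> \<le> ennreal (2 * (pi * C * (K / \<beta> + a) * exp (- a / max 1 (K / \<beta>))))"
  proof (intro ennreal_leI mult_left_mono)
    have "(K - \<beta>) * T = A - A / b" and "\<beta> * T = A / b"
      using \<beta> K b by (simp_all add: T_def b_def field_simps)
    then have "c * T + C * M / T * exp (- \<beta> * T) / \<beta>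
        = C * (A * exp (- a) * max 1 (exp (A - A / b)) + M * b / A * exp (- (A / b)))"
      using \<beta> K b by (simp add: c_def T_def b_def field_simps)
    also have "\<dots> \<le> C * (pi * (b + a) * exp (- a / max 1 b))"
      unfolding A_def using split_bound[OF a b M] C by (intro mult_left_mono) auto
    finally show "c * T + C * M / T * exp (- \<beta> * T) / \<beta> \<le> pi * C * (K / \<beta> + a) * exp (- a / max 1 (K / \<beta>))"
      by (simp add: b_def mult_ac)
  qed simp
  finally show ?thesis
    by (simp add: mult_left_mono)
qed

lemma nn_integral_fourier_majorant_le:
  assumes "C > 0" "\<beta> > 0" "K > 0" "a \<ge> 0" and M: "M = 1 \<or> (M = 2 \<and> a = 0)"
  shows "(\<integral>\<^sup>+ w. ennreal (fourier_majorant C \<beta> K a M \<bar>w\<bar>) \<partial>lborel)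
           \<le> ennreal (2 * (pi * C * (K / \<beta> + a) * exp (- a / max 1 (K / \<beta>))))"
proof (cases "2 * K \<le> \<beta>")
  case True
  have "M \<ge> 0"
    using M by auto
  with True show ?thesis
    using assms by (intro nn_integral_fourier_majorant_weak) auto
next
  case False
  then show ?thesis
    using assms by (intro nn_integral_fourier_majorant_strong) auto
qed

section \<open>Entries of the Weyl functional calculus\<close>

lemma tendsto_set_integral_excision:
  fixes g :: "real \<Rightarrow> 'a::{banach, second_countable_topology}"
  assumes g: "integrable lborel g"
  shows "((\<lambda>\<epsilon>. LINT w:{w. \<epsilon> \<le> \<bar>w\<bar>}|lborel. g w) \<longlongrightarrow> integral\<^sup>L lborel g) (at_right 0)"
proof (rule tendsto_at_right_sequentially[where b=1])
  fix S :: "nat \<Rightarrow> real"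
  assume "S \<longlonglongrightarrow> 0"
  have g_meas [measurable]: "g \<in> borel_measurable borel"
    using borel_measurable_integrable[OF g] by simp
  have "AE w in lborel. (\<lambda>n. indicator {w. S n \<le> \<bar>w\<bar>} w *\<^sub>R g w) \<longlonglongrightarrow> g w"
  proof (rule eventually_mono[OF AE_lborel_singleton[of 0]])
    fix w :: real
    assume "w \<noteq> 0"
    then have "eventually (\<lambda>n. S n < \<bar>w\<bar>) sequentially"
      using order_tendstoD(2)[OF \<open>S \<longlonglongrightarrow> 0\<close>, of "\<bar>w\<bar>"] by simp
    then have "eventually (\<lambda>n. indicator {w. S n \<le> \<bar>w\<bar>} w *\<^sub>R g w = g w) sequentially"
      by eventually_elim simp
    then show "(\<lambda>n. indicator {w. S n \<le> \<bar>w\<bar>} w *\<^sub>R g w) \<longlonglongrightarrow> g w"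
      by (rule tendsto_eventually)
  qed
  then show "(\<lambda>n. LINT w:{w. S n \<le> \<bar>w\<bar>}|lborel. g w) \<longlonglongrightarrow> integral\<^sup>L lborel g"
    unfolding set_lebesgue_integral_def
    by (intro integral_dominated_convergence[where w="\<lambda>w. norm (g w)"])
       (use g in \<open>auto simp: indicator_def\<close>)
qed simp

locale weyl_symbol = decaying_kernel +
  fixes f :: "real \<Rightarrow> real" and fhat :: "real \<Rightarrow> complex" and \<beta> C\<beta> :: real
  assumes fhat_meas: "fhat \<in> borel_measurable borel"
    and fourier: "\<forall>E. ((\<lambda>\<epsilon>. LINT w:{w. \<epsilon> \<le> \<bar>w\<bar>}|lborel. fhat w * exp (\<i> * complex_of_real (w * E)))
                       \<longlongrightarrow> complex_of_real (2 * pi * f E)) (at_right 0)"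
    and \<beta>_pos: "\<beta> > 0" and C\<beta>_pos: "C\<beta> > 0"
    and fhat_decay: "\<forall>w. cmod (fhat w * complex_of_real w) \<le> C\<beta> * exp (- \<beta> * \<bar>w\<bar>)"
begin

lemma norm_fhat_le: "w \<noteq> 0 \<Longrightarrow> cmod (fhat w) \<le> C\<beta> * exp (- \<beta> * \<bar>w\<bar>) / \<bar>w\<bar>"
  using fhat_decay[rule_format, of w] by (simp add: norm_mult field_simps)

lemma set_integrable_fhat:
  assumes \<epsilon>: "\<epsilon> > 0"
  shows "set_integrable lborel {w. \<epsilon> \<le> \<bar>w\<bar>} fhat"
  unfolding set_integrable_def
proof (rule integrableI_bounded)
  note [measurable] = fhat_meas
  show "(\<lambda>w. indicator {w. \<epsilon> \<le> \<bar>w\<bar>} w *\<^sub>R fhat w) \<in> borel_measurable lborel"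
    by measurable
  have "norm (indicator {w. \<epsilon> \<le> \<bar>w\<bar>} w *\<^sub>R fhat w) \<le> C\<beta> / \<epsilon> * exp (- \<beta> * \<bar>w\<bar>)" for w
  proof (cases "\<epsilon> \<le> \<bar>w\<bar>")
    case True
    then have "cmod (fhat w) \<le> C\<beta> * exp (- \<beta> * \<bar>w\<bar>) / \<bar>w\<bar>"
      using \<epsilon> by (intro norm_fhat_le) auto
    also have "\<dots> \<le> C\<beta> * exp (- \<beta> * \<bar>w\<bar>) / \<epsilon>"
      using True \<epsilon> C\<beta>_pos by (intro divide_left_mono) auto
    finally show ?thesis
      using True by simp
  qed (use C\<beta>_pos \<epsilon> in simp)
  then have "(\<integral>\<^sup>+ w. ennreal (norm (indicator {w. \<epsilon> \<le> \<bar>w\<bar>} w *\<^sub>R fhat w)) \<partial>lborel)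
        \<le> (\<integral>\<^sup>+ w. ennreal (C\<beta> / \<epsilon> * exp (- \<beta> * \<bar>w\<bar>)) \<partial>lborel)"
    by (intro nn_integral_mono ennreal_leI)
  also have "\<dots> \<le> 2 * (\<integral>\<^sup>+ t. ennreal (C\<beta> / \<epsilon> * exp (- \<beta> * t)) * indicator {0..} t \<partial>lborel)"
    by (rule nn_integral_abs_le) simp
  also have "\<dots> = 2 * ennreal (C\<beta> / \<epsilon> * exp (- \<beta> * 0) / \<beta>)"
    using \<beta>_pos C\<beta>_pos \<epsilon> by (subst nn_integral_exp_tail) auto
  also have "\<dots> < \<infinity>"
    by (simp add: ennreal_mult_less_top)
  finally show "(\<integral>\<^sup>+ w. ennreal (norm (indicator {w. \<epsilon> \<le> \<bar>w\<bar>} w *\<^sub>R fhat w)) \<partial>lborel) < \<infinity>" .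
qed

lemma norm_fhat_ker_exp_sub_le:
  assumes x: "x \<in> Lam" and y: "y \<in> Lam"
  shows "cmod (fhat w * (U w x y $ i $ j - P 0 x y $ i $ j))
           \<le> fourier_majorant C\<beta> \<beta> K (real_of_int \<bar>x - y\<bar> / d) (if x = y then 2 else 1) \<bar>w\<bar>"
proof (cases "w = 0")
  case True
  then show ?thesis
    using ker_exp_zero[OF x y] by (simp add: fourier_majorant_def)
next
  case False
  have "cmod (U w x y $ i $ j - P 0 x y $ i $ j) \<le> (exp (K * \<bar>w\<bar>) - 1) * exp (- (real_of_int \<bar>x - y\<bar> / d))"
    using norm_ker_exp_sub_le[OF x y, of w i j] by (simp add: mult.commute)
  moreover have "cmod (U w x y $ i $ j - P 0 x y $ i $ j) \<le> (if x = y then 2 else 1)"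
  proof (cases "x = y")
    case True
    have "cmod (U w x y $ i $ j - P 0 x y $ i $ j) \<le> cmod (U w x y $ i $ j) + cmod (P 0 x y $ i $ j)"
      by (rule norm_triangle_ineq4)
    also have "\<dots> \<le> 1 + 1"
      using norm_ker_exp_entry_le_1[OF x y] by (intro add_mono) (auto simp: mat_def)
    finally show ?thesis
      using True by simp
  next
    case False
    then show ?thesis
      using norm_ker_exp_entry_le_1[OF x y] by simp
  qed
  ultimately have "cmod (fhat w) * cmod (U w x y $ i $ j - P 0 x y $ i $ j)
      \<le> (C\<beta> * exp (- \<beta> * \<bar>w\<bar>) / \<bar>w\<bar>)
         * min (if x = y then 2 else 1) ((exp (K * \<bar>w\<bar>) - 1) * exp (- (real_of_int \<bar>x - y\<bar> / d)))"
    using False C\<beta>_pos by (intro mult_mono norm_fhat_le) auto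
  then show ?thesis
    using False by (simp add: fourier_majorant_def norm_mult)
qed

lemma nn_integral_norm_fhat_ker_exp_sub_le:
  assumes x: "x \<in> Lam" and y: "y \<in> Lam"
  defines "a \<equiv> real_of_int \<bar>x - y\<bar> / d"
  shows "(\<integral>\<^sup>+ w. ennreal (cmod (fhat w * (U w x y $ i $ j - P 0 x y $ i $ j))) \<partial>lborel)
           \<le> ennreal (2 * (pi * C\<beta> * (K / \<beta> + a) * exp (- a / max 1 (K / \<beta>))))"
proof -
  have "(\<integral>\<^sup>+ w. ennreal (cmod (fhat w * (U w x y $ i $ j - P 0 x y $ i $ j))) \<partial>lborel)
      \<le> (\<integral>\<^sup>+ w. ennreal (fourier_majorant C\<beta> \<beta> K a (if x = y then 2 else 1) \<bar>w\<bar>) \<partial>lborel)"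
    unfolding a_def by (intro nn_integral_mono ennreal_leI norm_fhat_ker_exp_sub_le x y)
  also have "\<dots> \<le> ennreal (2 * (pi * C\<beta> * (K / \<beta> + a) * exp (- a / max 1 (K / \<beta>))))"
    using C\<beta>_pos \<beta>_pos K_pos d_pos by (intro nn_integral_fourier_majorant_le) (auto simp: a_def)
  finally show ?thesis .
qed

lemma integrable_fhat_ker_exp_sub:
  assumes x: "x \<in> Lam" and y: "y \<in> Lam"
  shows "integrable lborel (\<lambda>w. fhat w * (U w x y $ i $ j - P 0 x y $ i $ j))"
proof (rule integrableI_bounded)
  note [measurable] = fhat_meas borel_measurable_ker_exp_entry[OF x y]
  show "(\<lambda>w. fhat w * (U w x y $ i $ j - P 0 x y $ i $ j)) \<in> borel_measurable lborel"
    by measurable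
  show "(\<integral>\<^sup>+ w. ennreal (norm (fhat w * (U w x y $ i $ j - P 0 x y $ i $ j))) \<partial>lborel) < \<infinity>"
    using nn_integral_norm_fhat_ker_exp_sub_le[OF x y, of i j] by (simp add: le_less_trans)
qed

text \<open>Since fhat integrates to 2 pi f(0) in the principal-value sense, the Weyl calculus splits
  into f(0) times the identity kernel plus an absolutely convergent integral.\<close>

lemma weyl_calc_entry_eq:
  fixes i j :: 2
  assumes x: "x \<in> Lam" and y: "y \<in> Lam"
  defines "D \<equiv> \<lambda>w. fhat w * (U w x y $ i $ j - P 0 x y $ i $ j)"
  shows "weyl_calc fhat Lam H x y $ i $ j
           = (P 0 x y $ i $ j * complex_of_real (2 * pi * f 0) + integral\<^sup>L lborel D) / complex_of_real (2 * pi)"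
proof -
  let ?I = "\<lambda>\<epsilon> g. LINT w:{w. \<epsilon> \<le> \<bar>w\<bar>}|lborel. g w"
  have D_int: "integrable lborel D"
    unfolding D_def by (rule integrable_fhat_ker_exp_sub[OF x y])
  have split: "?I \<epsilon> (\<lambda>w. fhat w * U w x y $ i $ j)
      = P 0 x y $ i $ j * ?I \<epsilon> (\<lambda>w. fhat w * exp (\<i> * complex_of_real (w * 0))) + ?I \<epsilon> D"
    if "\<epsilon> > 0" for \<epsilon>
  proof -
    have "set_integrable lborel {w. \<epsilon> \<le> \<bar>w\<bar>} (\<lambda>w. P 0 x y $ i $ j * (fhat w * exp (\<i> * complex_of_real (w * 0))))"
      using set_integrable_fhat[OF that] by simp
    moreover have "set_integrable lborel {w. \<epsilon> \<le> \<bar>w\<bar>} D"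
      unfolding set_integrable_def by (rule integrable_mult_indicator) (use D_int in auto)
    moreover have "(\<lambda>w. fhat w * U w x y $ i $ j)
        = (\<lambda>w. P 0 x y $ i $ j * (fhat w * exp (\<i> * complex_of_real (w * 0))) + D w)"
      by (auto simp: D_def fun_eq_iff algebra_simps)
    ultimately show ?thesis
      by (simp add: set_integral_add set_integral_mult_right)
  qed
  have "((\<lambda>\<epsilon>. P 0 x y $ i $ j * ?I \<epsilon> (\<lambda>w. fhat w * exp (\<i> * complex_of_real (w * 0))) + ?I \<epsilon> D)
      \<longlongrightarrow> P 0 x y $ i $ j * complex_of_real (2 * pi * f 0) + integral\<^sup>L lborel D) (at_right 0)"
    by (intro tendsto_add tendsto_mult_left fourier[rule_format] tendsto_set_integral_excision D_int)
  moreover have "eventually (\<lambda>\<epsilon>. P 0 x y $ i $ j * ?I \<epsilon> (\<lambda>w. fhat w * exp (\<i> * complex_of_real (w * 0))) + ?I \<epsilon> D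
      = ?I \<epsilon> (\<lambda>w. fhat w * U w x y $ i $ j)) (at_right 0)"
    using eventually_at_right_less[of 0] by eventually_elim (simp add: split)
  ultimately have "((\<lambda>\<epsilon>. ?I \<epsilon> (\<lambda>w. fhat w * U w x y $ i $ j))
      \<longlongrightarrow> P 0 x y $ i $ j * complex_of_real (2 * pi * f 0) + integral\<^sup>L lborel D) (at_right 0)"
    by (rule Lim_transform_eventually)
  then have "pv_integral (\<lambda>w. fhat w * U w x y $ i $ j) = P 0 x y $ i $ j * complex_of_real (2 * pi * f 0) + integral\<^sup>L lborel D"
    unfolding pv_integral_def by (rule tendsto_Lim[OF trivial_limit_at_right_real])
  then show ?thesis
    by (simp add: weyl_calc_def)
qed

lemma norm_weyl_calc_entry_le:
  assumes x: "x \<in> Lam" and y: "y \<in> Lam"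
  defines "a \<equiv> real_of_int \<bar>x - y\<bar> / d"
  shows "cmod (weyl_calc fhat Lam H x y $ i $ j)
           \<le> (if i = j then (if x = y then \<bar>f 0\<bar> else 0) else 0) + C\<beta> * (K / \<beta> + a) * exp (- a / max 1 (K / \<beta>))"
proof -
  define D where "D w = fhat w * (U w x y $ i $ j - P 0 x y $ i $ j)" for w
  define R where "R = pi * C\<beta> * (K / \<beta> + a) * exp (- a / max 1 (K / \<beta>))"
  have R_nonneg: "0 \<le> R"
    using C\<beta>_pos K_pos \<beta>_pos d_pos by (simp add: R_def a_def)
  have "ennreal (cmod (integral\<^sup>L lborel D)) \<le> ennreal (2 * R)"
    using order_trans[OF integral_norm_bound_ennreal nn_integral_norm_fhat_ker_exp_sub_le]
      integrable_fhat_ker_exp_sub x y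
    unfolding D_def R_def a_def by blast
  then have D_bound: "cmod (integral\<^sup>L lborel D) \<le> 2 * R"
    using R_nonneg by (simp add: ennreal_le_iff)
  have "cmod (P 0 x y $ i $ j * complex_of_real (2 * pi * f 0) + integral\<^sup>L lborel D)
      \<le> cmod (P 0 x y $ i $ j) * (2 * pi * \<bar>f 0\<bar>) + 2 * R"
    by (rule order_trans[OF norm_triangle_ineq add_mono[OF _ D_bound]]) (simp add: norm_mult abs_mult)
  then have "cmod (weyl_calc fhat Lam H x y $ i $ j) \<le> (cmod (P 0 x y $ i $ j) * (2 * pi * \<bar>f 0\<bar>) + 2 * R) / (2 * pi)"
    unfolding weyl_calc_entry_eq[OF x y] D_def by (simp add: norm_divide divide_right_mono)
  also have "\<dots> = cmod (P 0 x y $ i $ j) * \<bar>f 0\<bar> + R / pi"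
    by (simp add: field_simps)
  finally show ?thesis
    by (cases "x = y"; cases "i = j") (simp_all add: R_def mat_def mult.assoc)
qed

lemma blk_norm_weyl_calc_le:
  assumes x: "x \<in> Lam" and y: "y \<in> Lam"
  defines "a \<equiv> real_of_int \<bar>x - y\<bar> / d"
  shows "blk_norm (weyl_calc fhat Lam H x y)
           \<le> 2 * (if x = y then \<bar>f 0\<bar> else 0) + 4 * (C\<beta> * (K / \<beta> + a) * exp (- a / max 1 (K / \<beta>)))"
  unfolding a_def by (intro blk_norm_le_of_entries_le norm_weyl_calc_entry_le x y)

end

theorem proposition2:
  fixes Lam :: "int set" and H :: "int \<Rightarrow> int \<Rightarrow> block"
    and f :: "real \<Rightarrow> real" and fhat :: "real \<Rightarrow> complex"
    and d Kd \<beta> C\<beta> :: real and x y :: int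
  assumes Lam: "(\<exists>L::int. L > 0 \<and> Lam = {0..<L}) \<or> Lam = UNIV"
    and selfadj: "\<forall>x\<in>Lam. \<forall>x'\<in>Lam. H x' x = blk_adj (H x x')"
    and d_pos: "d > 0" and Kd_pos: "Kd > 0"
    and decay_summable: "\<forall>x\<in>Lam. (\<lambda>x'. blk_norm (H x x') * exp (real_of_int \<bar>x - x'\<bar> / d)) summable_on Lam"
    and decay: "\<forall>x\<in>Lam. (\<Sum>\<^sub>\<infinity>x'\<in>Lam. blk_norm (H x x') * exp (real_of_int \<bar>x - x'\<bar> / d)) \<le> Kd"
    and f_bdd: "bounded (range f)"
    and fhat_meas: "fhat \<in> borel_measurable borel"
    and fourier: "\<forall>E. ((\<lambda>\<epsilon>. LINT w:{w. \<epsilon> \<le> \<bar>w\<bar>}|lborel. fhat w * exp (\<i> * complex_of_real (w * E)))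
                       \<longlongrightarrow> complex_of_real (2 * pi * f E)) (at_right 0)"
    and \<beta>_pos: "\<beta> > 0" and C\<beta>_pos: "C\<beta> > 0"
    and fhat_decay: "\<forall>w. cmod (fhat w * complex_of_real w) \<le> C\<beta> * exp (- \<beta> * \<bar>w\<bar>)"
    and x: "x \<in> Lam" and y: "y \<in> Lam"
  shows "blk_norm (weyl_calc fhat Lam H x y)
     \<le> 4 * ((SUP E. \<bar>f E\<bar>) + C\<beta> * Kd / \<beta> + C\<beta> * real_of_int \<bar>x - y\<bar> / d)
         * exp (- real_of_int \<bar>x - y\<bar> / (d * max 1 (Kd / \<beta>)))"
proof -
  interpret weyl_symbol Lam H d Kd f fhat \<beta> C\<beta>
    by unfold_locales (fact selfadj d_pos Kd_pos decay_summable decay fhat_meas fourier \<beta>_pos C\<beta>_pos fhat_decay)+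
  define a where "a = real_of_int \<bar>x - y\<bar> / d"
  define e where "e = exp (- a / max 1 (Kd / \<beta>))"
  have "bdd_above (range (\<lambda>E. \<bar>f E\<bar>))"
    using f_bdd by (auto simp: bounded_iff intro: bdd_aboveI2)
  then have f0: "\<bar>f 0\<bar> \<le> (SUP E. \<bar>f E\<bar>)"
    by (rule cSUP_upper[OF UNIV_I])
  have "blk_norm (weyl_calc fhat Lam H x y) \<le> 2 * (if x = y then \<bar>f 0\<bar> else 0) + 4 * (C\<beta> * (Kd / \<beta> + a) * e)"
    using blk_norm_weyl_calc_le[OF x y] by (simp add: a_def e_def)
  also have "\<dots> \<le> 4 * ((SUP E. \<bar>f E\<bar>) + C\<beta> * Kd / \<beta> + C\<beta> * a) * e"
    using f0 C\<beta>_pos Kd_pos \<beta>_pos by (cases "x = y") (auto simp: a_def e_def algebra_simps)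
  finally show ?thesis
    by (simp add: a_def e_def)
qed

end
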